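(* The algorithm $\mathcal{U}$ described in the context is wait-free: in every execution (implementation history) of $\mathcal{U}$, no process can invoke DoOp$(o)$ and then take infinitely many steps within DoOp$(o)$ without completing it (i.e. without executing line 14).
   Context: Model: an asynchronous shared-memory system with possibly infinitely many processes, any of which may crash, communicating via atomic shared objects. A fetch-and-increment (F\&I) object stores an integer; F\&I$(C)$ atomically returns the current value and increments it. A generalized-compare-and-swap (GCAS) object $O$ stores a value and supports Read$(O)$ and GCAS$(c, O, v_1, v_2)$, which atomically does: if $c(\text{current value of } O, v_1)$ holds then set $O := v_2$ and return true, else return false. Tuples are compared componentwise for $=$; GCAS$(>, A, (t,-,-), v)$ succeeds iff the time field of $A$ is strictly greater than $t$. Implemented type $\mathcal{T} = (OP, RES, Q, \delta)$ with $\delta \subseteq Q\times OP\times Q\times RES$ and initial state $s_0$; a procedure $apply_{\mathcal{T}}(o,s)$ returns some $(s',r)$ with $(s,o,s',r)\in\delta$. $NULL$ is a value different from every response of $\mathcal{T}$, and $NOOP$ is a name different from every operation of $\mathcal{T}$. Algorithm $\mathcal{U}$: each process $p$ owns a GCAS object $H_p$ with fields $(time, response)$. Shared objects: F\&I object $C$, initially $1$; GCAS object $A$ with fields $(time, op, ptr)$, initially $(0, NOOP, h(NOOP))$, where $h(NOOP)$ is a pointer to an immutable location containing $(0,\perp)$; GCAS object $S$ with fields $(time, state, response, ptr)$, initially $(0, s_0, \perp, h(NOOP))$. Process $p$ performs operation $o$ by calling DoOp$(o)$: (1) DoOp$(o)$ invoked; (2) $t := $ F\&I$(C)$; (3) $H_p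 := (t, NULL)$; (4) while $H_p = (t, NULL)$ do: (5) $(t^*, s^*, r^*, roptr^* ) := S$; (6) GCAS$(=, *roptr^*, (t^*, NULL), (t^*, r^* ))$; (7) GCAS$(>, A, (t,-,-), (t, o, \&H_p))$; (8) $(t', o', roptr') := A$; (9) $(\hat t, \hat r) := *roptr'$; (10) if $(\hat t,\hat r) = (t', NULL)$ then (11) $(s', r') := apply_{\mathcal{T}}(o', s^* )$; (12) GCAS$(=, S, (t^*,s^*,r^*,roptr^* ), (t', s', r', roptr'))$; (13) else GCAS$(=, A, (t', o', roptr'), (t, o, \&H_p))$; end while; (14) return $H_p.response$. Lines 1 and 14 are the invocation and response steps. *)

theory Defs
  imports Main
begin

text \<open>Values stored in response fields: the special value NULL, the initial value bot
  (written as a perpendicular in the paper), or a genuine response of the type T.\<close>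
datatype 'r rval = NULL | BOT | Val 'r

text \<open>Pointers: either the immutable location h(NOOP) containing (0, bot),
  or the address of the GCAS object H_p of process p.\<close>
datatype 'p ptr = HNoop | HP 'p

text \<open>Operation field of A: None encodes NOOP, Some o an operation o of T.\<close>

record ('p, 'o, 'q, 'r) local =
  pc   :: nat            \<comment> \<open>next line to execute; 1 = idle (next step is an invocation)\<close>
  lop  :: 'o             \<comment> \<open>o, argument of the current DoOp\<close>
  lt   :: nat            \<comment> \<open>t\<close>
  ts   :: nat            \<comment> \<open>t*\<close>
  ss   :: 'q             \<comment> \<open>s*\<close>
  rs   :: "'r rval"      \<comment> \<open>r*\<close>
  rps  :: "'p ptr"       \<comment> \<open>roptr*\<close>
  tp   :: nat            \<comment> \<open>t'\<close>
  opp  :: "'o option"    \<comment> \<open>o'\<close>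
  rpp  :: "'p ptr"       \<comment> \<open>roptr'\<close>
  th   :: nat            \<comment> \<open>t hat\<close>
  rh   :: "'r rval"      \<comment> \<open>r hat\<close>
  sp   :: 'q             \<comment> \<open>s'\<close>
  rp   :: 'r             \<comment> \<open>r'\<close>

record ('p, 'o, 'q, 'r) config =
  Cc  :: nat                                  \<comment> \<open>F\&I object C\<close>
  Aa  :: "nat \<times> 'o option \<times> 'p ptr"        \<comment> \<open>GCAS object A\<close>
  Ss  :: "nat \<times> 'q \<times> 'r rval \<times> 'p ptr"    \<comment> \<open>GCAS object S\<close>
  Hh  :: "'p \<Rightarrow> nat \<times> 'r rval"             \<comment> \<open>GCAS objects H_p\<close>
  loc :: "'p \<Rightarrow> ('p, 'o, 'q, 'r) local"

definition init_config ::
  "'q \<Rightarrow> ('p \<Rightarrow> nat \<times> 'r rval) \<Rightarrow> ('p \<Rightarrow> ('p,'o,'q,'r) local) \<Rightarrow> ('p,'o,'q,'r) config \<Rightarrow> bool" where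
  "init_config s0 H0 L0 c \<longleftrightarrow>
     Cc c = 1 \<and> Aa c = (0, None, HNoop) \<and> Ss c = (0, s0, BOT, HNoop) \<and> Hh c = H0 \<and>
     loc c = L0 \<and> (\<forall>p. pc (L0 p) = 1)"

definition deref :: "('p,'o,'q,'r) config \<Rightarrow> 'p ptr \<Rightarrow> nat \<times> 'r rval" where
  "deref c x = (case x of HNoop \<Rightarrow> (0, BOT) | HP q \<Rightarrow> Hh c q)"

text \<open>One atomic step of process p (one numbered line of DoOp).\<close>
definition U_step ::
  "('q \<times> 'o \<times> 'q \<times> 'r) set \<Rightarrow> 'p \<Rightarrow> ('p,'o,'q,'r) config \<Rightarrow> ('p,'o,'q,'r) config \<Rightarrow> bool" where
  "U_step \<delta> p c c' \<longleftrightarrow>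
    (let l = loc c p; setl = (\<lambda>l'. c\<lparr>loc := (loc c)(p := l')\<rparr>) in
     (if pc l = 1 then (\<exists>x. c' = setl (l\<lparr>pc := 2, lop := x\<rparr>))
      else if pc l = 2 then c' = (setl (l\<lparr>pc := 3, lt := Cc c\<rparr>))\<lparr>Cc := Cc c + 1\<rparr>
      else if pc l = 3 then c' = (setl (l\<lparr>pc := 4\<rparr>))\<lparr>Hh := (Hh c)(p := (lt l, NULL))\<rparr>
      else if pc l = 4 then c' = setl (l\<lparr>pc := (if Hh c p = (lt l, NULL) then 5 else 14)\<rparr>)
      else if pc l = 5 then (case Ss c of (t1, s1, r1, p1) \<Rightarrow>
              c' = setl (l\<lparr>pc := 6, ts := t1, ss := s1, rs := r1, rps := p1\<rparr>))
      else if pc l = 6 then c' = (setl (l\<lparr>pc := 7\<rparr>))\<lparr>Hh :=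
              (case rps l of HNoop \<Rightarrow> Hh c
               | HP q \<Rightarrow> (if Hh c q = (ts l, NULL) then (Hh c)(q := (ts l, rs l)) else Hh c))\<rparr>
      else if pc l = 7 then c' = (setl (l\<lparr>pc := 8\<rparr>))\<lparr>Aa :=
              (if fst (Aa c) > lt l then (lt l, Some (lop l), HP p) else Aa c)\<rparr>
      else if pc l = 8 then (case Aa c of (t1, o1, p1) \<Rightarrow>
              c' = setl (l\<lparr>pc := 9, tp := t1, opp := o1, rpp := p1\<rparr>))
      else if pc l = 9 then (case deref c (rpp l) of (t1, r1) \<Rightarrow>
              c' = setl (l\<lparr>pc := 10, th := t1, rh := r1\<rparr>))
      else if pc l = 10 then c' = setl (l\<lparr>pc := (if (th l, rh l) = (tp l, NULL) then 11 else 13)\<rparr>)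
      else if pc l = 11 then (\<exists>x s1 r1. opp l = Some x \<and> (ss l, x, s1, r1) \<in> \<delta> \<and>
              c' = setl (l\<lparr>pc := 12, sp := s1, rp := r1\<rparr>))
      else if pc l = 12 then c' = (setl (l\<lparr>pc := 4\<rparr>))\<lparr>Ss :=
              (if Ss c = (ts l, ss l, rs l, rps l) then (tp l, sp l, Val (rp l), rpp l) else Ss c)\<rparr>
      else if pc l = 13 then c' = (setl (l\<lparr>pc := 4\<rparr>))\<lparr>Aa :=
              (if Aa c = (tp l, opp l, rpp l) then (lt l, Some (lop l), HP p) else Aa c)\<rparr>
      else if pc l = 14 then c' = setl (l\<lparr>pc := 1\<rparr>)
      else False))"

end

theory Submission
  imports Defs "HOL-Library.Infinite_Set"
begin

text \<open>
  Operations are ordered by the timestamps drawn from C, and we show by strong induction on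
  the timestamp t that a process with timestamp t that keeps taking steps completes.
  Suppose p has timestamp t and loops forever, so H_p stays (t, NULL). By induction, the
  finitely many operations with smaller timestamps eventually complete or their processes
  stop, so from some point on every other process inside DoOp has a timestamp larger than t.
  From then on A changes only finitely often: once its time is at most t (which the next
  line 7 of p ensures) only p itself can replace it. So A becomes constant, pointing to some
  H_q that must stay pending, since otherwise p's line 13 would replace A by its own triple.
  Afterwards S can only be changed by processes whose snapshot of A is older, each at most
  once, so S becomes constant too; but then p's next iteration installs the triple of A in S,
  and the next reader of S answers H_q, a contradiction.
\<close>

section \<open>Single steps of the algorithm\<close>

lemma U_step_loc_other:
  assumes "U_step \<delta> x c c'" "y \<noteq> x"
  shows "loc c' y = loc c y"
  using assms unfolding U_step_def Let_def
  by (auto split: if_splits prod.splits)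

lemma U_step_Cc:
  assumes "U_step \<delta> x c c'"
  shows "Cc c' = (if pc (loc c x) = 2 then Suc (Cc c) else Cc c)"
  using assms unfolding U_step_def Let_def
  by (auto split: if_splits prod.splits)

lemma U_step_Aa:
  assumes "U_step \<delta> x c c'"
  shows "Aa c' =
    (if pc (loc c x) = 7 \<and> fst (Aa c) > lt (loc c x)
       \<or> pc (loc c x) = 13 \<and> Aa c = (tp (loc c x), opp (loc c x), rpp (loc c x))
     then (lt (loc c x), Some (lop (loc c x)), HP x) else Aa c)"
  using assms unfolding U_step_def Let_def
  by (auto split: if_splits prod.splits)

lemma U_step_Ss:
  assumes "U_step \<delta> x c c'"
  shows "Ss c' =
    (if pc (loc c x) = 12 \<and> Ss c = (ts (loc c x), ss (loc c x), rs (loc c x), rps (loc c x))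
     then (tp (loc c x), sp (loc c x), Val (rp (loc c x)), rpp (loc c x)) else Ss c)"
  using assms unfolding U_step_def Let_def
  by (auto split: if_splits prod.splits)

lemma U_step_Hh:
  assumes "U_step \<delta> x c c'"
  shows "Hh c' =
    (if pc (loc c x) = 3 then (Hh c)(x := (lt (loc c x), NULL))
     else if pc (loc c x) = 6 then
       (case rps (loc c x) of
          HNoop \<Rightarrow> Hh c
        | HP q \<Rightarrow> if Hh c q = (ts (loc c x), NULL) then (Hh c)(q := (ts (loc c x), rs (loc c x)))
                 else Hh c)
     else Hh c)"
  using assms unfolding U_step_def Let_def
  by (auto split: if_splits prod.splits)

lemma U_step_loc:
  assumes "U_step \<delta> x c c'"
  shows "pc (loc c x) = 1 \<Longrightarrow> \<exists>o1. loc c' x = (loc c x)\<lparr>pc := 2, lop := o1\<rparr>"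
    and "pc (loc c x) = 2 \<Longrightarrow> loc c' x = (loc c x)\<lparr>pc := 3, lt := Cc c\<rparr>"
    and "pc (loc c x) = 3 \<Longrightarrow> loc c' x = (loc c x)\<lparr>pc := 4\<rparr>"
    and "pc (loc c x) = 4 \<Longrightarrow>
      loc c' x = (loc c x)\<lparr>pc := (if Hh c x = (lt (loc c x), NULL) then 5 else 14)\<rparr>"
    and "pc (loc c x) = 5 \<Longrightarrow>
      loc c' x = (loc c x)\<lparr>pc := 6, ts := fst (Ss c), ss := fst (snd (Ss c)),
                           rs := fst (snd (snd (Ss c))), rps := snd (snd (snd (Ss c)))\<rparr>"
    and "pc (loc c x) = 6 \<Longrightarrow> loc c' x = (loc c x)\<lparr>pc := 7\<rparr>"
    and "pc (loc c x) = 7 \<Longrightarrow> loc c' x = (loc c x)\<lparr>pc := 8\<rparr>"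
    and "pc (loc c x) = 8 \<Longrightarrow>
      loc c' x = (loc c x)\<lparr>pc := 9, tp := fst (Aa c), opp := fst (snd (Aa c)),
                           rpp := snd (snd (Aa c))\<rparr>"
    and "pc (loc c x) = 9 \<Longrightarrow>
      loc c' x = (loc c x)\<lparr>pc := 10, th := fst (deref c (rpp (loc c x))),
                           rh := snd (deref c (rpp (loc c x)))\<rparr>"
    and "pc (loc c x) = 10 \<Longrightarrow>
      loc c' x = (loc c x)\<lparr>pc := (if (th (loc c x), rh (loc c x)) = (tp (loc c x), NULL)
                                  then 11 else 13)\<rparr>"
    and "pc (loc c x) = 12 \<Longrightarrow> loc c' x = (loc c x)\<lparr>pc := 4\<rparr>"
    and "pc (loc c x) = 13 \<Longrightarrow> loc c' x = (loc c x)\<lparr>pc := 4\<rparr>"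
    and "pc (loc c x) = 14 \<Longrightarrow> loc c' x = (loc c x)\<lparr>pc := 1\<rparr>"
    and "pc (loc c x) \<in> {1..14}"
  using assms unfolding U_step_def Let_def
  by (auto split: if_splits prod.splits)

lemma U_step_loc_11:
  assumes "U_step \<delta> x c c'" "pc (loc c x) = 11"
  obtains s1 r1 where "loc c' x = (loc c x)\<lparr>pc := 12, sp := s1, rp := r1\<rparr>"
  using assms unfolding U_step_def Let_def by auto

lemma U_step_lt:
  assumes "U_step \<delta> x c c'"
  shows "lt (loc c' x) = (if pc (loc c x) = 2 then Cc c else lt (loc c x))"
  using assms unfolding U_step_def Let_def
  by (auto split: if_splits prod.splits)

lemma U_step_A_snapshot:
  assumes "U_step \<delta> x c c'" "pc (loc c x) \<in> {9, 10, 11}"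
  shows "tp (loc c' x) = tp (loc c x) \<and> rpp (loc c' x) = rpp (loc c x)"
  using assms unfolding U_step_def Let_def
  by (auto split: if_splits prod.splits)

lemma U_step_active_before:
  assumes "U_step \<delta> x c c'" "pc (loc c' x) \<in> {3..14}"
  shows "pc (loc c x) \<in> {2..13}"
  using assms unfolding U_step_def Let_def
  by (auto split: if_splits prod.splits)

lemma U_step_pc_eq_3:
  assumes "U_step \<delta> x c c'"
  shows "pc (loc c' x) = 3 \<longleftrightarrow> pc (loc c x) = 2"
  using assms unfolding U_step_def Let_def
  by (auto split: if_splits prod.splits)

lemma U_step_loop_progress:
  assumes "U_step \<delta> x c c'" "pc (loc c x) \<in> {5..13}"
  shows "pc (loc c' x) = 4 \<or> pc (loc c x) < pc (loc c' x) \<and> pc (loc c' x) \<le> 13"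
  using assms unfolding U_step_def Let_def
  by (auto split: if_splits prod.splits)

lemma U_step_within_DoOp:
  assumes "U_step \<delta> x c c'" "pc (loc c x) \<in> {3..13}"
  shows "pc (loc c' x) \<in> {4..14} \<and> lt (loc c' x) = lt (loc c x) \<and> lop (loc c' x) = lop (loc c x)"
  using assms unfolding U_step_def Let_def
  by (auto split: if_splits prod.splits)

lemma U_step_enter_9_13:
  assumes "U_step \<delta> x c c'" "pc (loc c' x) \<in> {9..13}"
  shows "pc (loc c x) \<in> {8..11}"
  using assms unfolding U_step_def Let_def
  by (auto split: if_splits prod.splits)

section \<open>The invariant\<close>

definition circulating :: "('p,'o,'q,'r) config \<Rightarrow> (nat \<times> 'p ptr) set" where
  "circulating c =
     {(fst (Aa c), snd (snd (Aa c))), (fst (Ss c), snd (snd (snd (Ss c))))}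
     \<union> {(ts (loc c x), rps (loc c x)) | x. pc (loc c x) \<in> {6..12}}
     \<union> {(tp (loc c x), rpp (loc c x)) | x. pc (loc c x) \<in> {9..13}}"

definition inv_clock :: "('p,'o,'q,'r) config \<Rightarrow> bool" where
  "inv_clock c \<longleftrightarrow> 1 \<le> Cc c \<and>
     (\<forall>x. pc (loc c x) \<in> {3..14} \<longrightarrow> 0 < lt (loc c x) \<and> lt (loc c x) < Cc c)"

definition inv_distinct_ts :: "('p,'o,'q,'r) config \<Rightarrow> bool" where
  "inv_distinct_ts c \<longleftrightarrow> (\<forall>x y. x \<noteq> y \<longrightarrow> pc (loc c x) \<in> {3..14} \<longrightarrow> pc (loc c y) \<in> {3..14}
     \<longrightarrow> lt (loc c x) \<noteq> lt (loc c y))"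

definition inv_owner :: "('p,'o,'q,'r) config \<Rightarrow> bool" where
  "inv_owner c \<longleftrightarrow> (\<forall>\<tau> y. (\<tau>, HP y) \<in> circulating c \<longrightarrow>
     \<tau> < Cc c \<and> (pc (loc c y) = 3 \<longrightarrow> \<tau> < lt (loc c y)) \<and>
     (\<forall>z. pc (loc c z) \<in> {3..14} \<longrightarrow> lt (loc c z) = \<tau> \<longrightarrow> z = y))"

definition inv_values :: "('p,'o,'q,'r) config \<Rightarrow> bool" where
  "inv_values c \<longleftrightarrow> (snd (snd (Aa c)) = HNoop \<longrightarrow> fst (Aa c) = 0) \<and>
     fst (snd (snd (Ss c))) \<noteq> NULL \<and> (\<forall>x. pc (loc c x) \<in> {6..12} \<longrightarrow> rs (loc c x) \<noteq> NULL)"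

text \<open>What y knows to be answered: the response object of its S snapshot once it has
  helped it (line 6), and that of its A snapshot once line 9 found it answered.\<close>
definition helped_at :: "('p,'o,'q,'r) config \<Rightarrow> 'p \<Rightarrow> bool" where
  "helped_at c y \<longleftrightarrow>
     (\<forall>q. pc (loc c y) \<in> {7..12} \<longrightarrow> rps (loc c y) = HP q \<longrightarrow> Hh c q \<noteq> (ts (loc c y), NULL)) \<and>
     (\<forall>q. pc (loc c y) = 10 \<longrightarrow> rpp (loc c y) = HP q \<longrightarrow>
        (th (loc c y), rh (loc c y)) \<noteq> (tp (loc c y), NULL) \<longrightarrow> Hh c q \<noteq> (tp (loc c y), NULL)) \<and>
     (\<forall>q. pc (loc c y) = 13 \<longrightarrow> rpp (loc c y) = HP q \<longrightarrow> Hh c q \<noteq> (tp (loc c y), NULL))"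

definition invariant :: "('p,'o,'q,'r) config \<Rightarrow> bool" where
  "invariant c \<longleftrightarrow>
     inv_clock c \<and> inv_distinct_ts c \<and> inv_owner c \<and> inv_values c \<and> (\<forall>y. helped_at c y)"

lemma invariant_init:
  assumes "init_config s0 H0 L0 c"
  shows "invariant c"
  using assms
  unfolding init_config_def invariant_def inv_clock_def inv_distinct_ts_def inv_owner_def
    inv_values_def helped_at_def circulating_def
  by auto

lemma circulating_A: "(fst (Aa c), snd (snd (Aa c))) \<in> circulating c"
  and circulating_S_snapshot: "pc (loc c x) \<in> {6..12} \<Longrightarrow> (ts (loc c x), rps (loc c x)) \<in> circulating c"
  and circulating_A_snapshot: "pc (loc c x) \<in> {9..13} \<Longrightarrow> (tp (loc c x), rpp (loc c x)) \<in> circulating c"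
  unfolding circulating_def by blast+

lemma circulating_step:
  assumes "U_step \<delta> x c c'"
  shows "circulating c' \<subseteq> circulating c \<union> (if pc (loc c x) \<in> {7,13} then {(lt (loc c x), HP x)} else {})"
  using assms unfolding circulating_def U_step_def Let_def
  by (auto split: if_splits prod.splits)

lemma inv_clock_step: "inv_clock c \<Longrightarrow> U_step \<delta> x c c' \<Longrightarrow> inv_clock c'"
  unfolding inv_clock_def U_step_def Let_def
  by (auto split: if_splits prod.splits)

lemma inv_distinct_ts_step:
  "inv_clock c \<Longrightarrow> inv_distinct_ts c \<Longrightarrow> U_step \<delta> x c c' \<Longrightarrow> inv_distinct_ts c'"
  unfolding inv_clock_def inv_distinct_ts_def U_step_def Let_def
  by (auto split: if_splits prod.splits)

lemma inv_values_step: "inv_values c \<Longrightarrow> U_step \<delta> x c c' \<Longrightarrow> inv_values c'"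
  unfolding inv_values_def U_step_def Let_def
  by (auto split: if_splits prod.splits)

lemma inv_ownerD:
  assumes "inv_owner c" "(\<tau>, HP y) \<in> circulating c"
  shows "\<tau> < Cc c" "pc (loc c y) = 3 \<Longrightarrow> \<tau> < lt (loc c y)"
    "pc (loc c z) \<in> {3..14} \<Longrightarrow> lt (loc c z) = \<tau> \<Longrightarrow> z = y"
  using assms unfolding inv_owner_def by blast+
lemma inv_owner_step:
  assumes clock: "inv_clock c" and distinct: "inv_distinct_ts c" and owner: "inv_owner c"
    and st: "U_step \<delta> x c c'"
  shows "inv_owner c'"
  unfolding inv_owner_def
proof (intro allI impI)
  fix \<tau> y assume circ: "(\<tau>, HP y) \<in> circulating c'"
  have other: "\<And>z. z \<noteq> x \<Longrightarrow> loc c' z = loc c z" using U_step_loc_other[OF st] by blast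
  have C_mono: "Cc c \<le> Cc c'" using U_step_Cc[OF st] by simp
  from circulating_step[OF st] circ
  consider (old) "(\<tau>, HP y) \<in> circulating c"
    | (new) "pc (loc c x) \<in> {7,13}" "\<tau> = lt (loc c x)" "y = x"
    by (auto split: if_splits)
  then show "\<tau> < Cc c' \<and> (pc (loc c' y) = 3 \<longrightarrow> \<tau> < lt (loc c' y)) \<and>
      (\<forall>z. pc (loc c' z) \<in> {3..14} \<longrightarrow> lt (loc c' z) = \<tau> \<longrightarrow> z = y)"
  proof cases
    case old
    note owned = inv_ownerD[OF owner old]
    have "pc (loc c' y) = 3 \<longrightarrow> \<tau> < lt (loc c' y)"
      using U_step_pc_eq_3[OF st] U_step_lt[OF st] owned(1,2) other by (cases "y = x") auto
    moreover have "z = y" if "pc (loc c' z) \<in> {3..14}" "lt (loc c' z) = \<tau>" for z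
    proof (cases "z = x")
      case True
      then have "pc (loc c x) \<in> {2..13}" using U_step_active_before[OF st] that(1) by simp
      then show ?thesis using U_step_lt[OF st] owned(1,3) that(2) True by (auto split: if_splits)
    next
      case False
      then show ?thesis using owned(3) other that by auto
    qed
    ultimately show ?thesis using owned(1) C_mono by auto
  next
    case new
    have "\<tau> < Cc c" using clock new(1,2) unfolding inv_clock_def by auto
    moreover have "pc (loc c' y) \<noteq> 3" using U_step_pc_eq_3[OF st] new by auto
    moreover have "z = y" if "pc (loc c' z) \<in> {3..14}" "lt (loc c' z) = \<tau>" for z
    proof (rule ccontr)
      assume "z \<noteq> y"
      then have "loc c' z = loc c z" using other new(3) by simp
      then show False
        using distinct that new \<open>z \<noteq> y\<close> unfolding inv_distinct_ts_def by auto
    qed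
    ultimately show ?thesis using C_mono by auto
  qed
qed

lemma U_step_pending_before:
  assumes vals: "inv_values c" and st: "U_step \<delta> x c c'" and "pc (loc c x) \<noteq> 3"
    and "Hh c' q = (\<tau>, NULL)"
  shows "Hh c q = (\<tau>, NULL)"
proof (cases "pc (loc c x) = 6")
  case True
  then have "rs (loc c x) \<noteq> NULL" using vals unfolding inv_values_def by auto
  then show ?thesis using assms(3,4) U_step_Hh[OF st] True by (auto split: ptr.splits if_splits)
next
  case False
  then show ?thesis using assms(3,4) U_step_Hh[OF st] by simp
qed

lemma U_step_not_pending:
  assumes "inv_values c" and st: "U_step \<delta> x c c'"
    and "x \<noteq> q \<or> pc (loc c x) \<noteq> 3 \<or> lt (loc c x) \<noteq> \<tau>" and "Hh c q \<noteq> (\<tau>, NULL)"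
  shows "Hh c' q \<noteq> (\<tau>, NULL)"
proof (cases "pc (loc c x) = 3")
  case True
  then show ?thesis using U_step_Hh[OF st] assms(3,4) by auto
next
  case False
  then show ?thesis using U_step_pending_before[OF assms(1) st False] assms(4) by blast
qed

lemma helped_at_step_self:
  assumes vals: "inv_values c" and st: "U_step \<delta> x c c'" and not3: "pc (loc c x) \<noteq> 3"
    and helped: "helped_at c x"
  shows "helped_at c' x"
proof -
  note before = U_step_pending_before[OF vals st not3]
  have "pc (loc c x) \<in> {1..14}" by (rule U_step_loc(14)[OF st])
  then have "pc (loc c x) \<in> {1,2,3,4,5,6,7,8,9,10,11,12,13,14}" by (simp, presburger)
  then consider "pc (loc c x) \<in> {1,2,4,5,12,13,14}" | "pc (loc c x) = 6" | "pc (loc c x) = 7"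
    | "pc (loc c x) = 8" | "pc (loc c x) = 9" | "pc (loc c x) = 10" | "pc (loc c x) = 11"
    using not3 by fastforce
  then show ?thesis
  proof cases
    case 1
    then have "pc (loc c' x) \<notin> {7..13}"
      using U_step_loc(1,2,4,5,11,12,13)[OF st] by (auto split: if_splits)
    then show ?thesis unfolding helped_at_def by auto
  next
    case 2
    have "rs (loc c x) \<noteq> NULL" using vals 2 unfolding inv_values_def by auto
    then show ?thesis
      unfolding helped_at_def U_step_loc(6)[OF st 2] using U_step_Hh[OF st] 2
      by (auto split: ptr.splits if_splits)
  next
    case 3
    show ?thesis using helped before 3 unfolding helped_at_def U_step_loc(7)[OF st 3] by auto
  next
    case 4
    show ?thesis using helped before 4 unfolding helped_at_def U_step_loc(8)[OF st 4] by auto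
  next
    case 5
    show ?thesis
      using helped before 5 unfolding helped_at_def U_step_loc(9)[OF st 5] deref_def
      by (auto split: ptr.splits)
  next
    case 6
    show ?thesis
      using helped before 6 unfolding helped_at_def U_step_loc(10)[OF st 6] by (auto split: if_splits)
  next
    case 7
    obtain s1 r1 where "loc c' x = (loc c x)\<lparr>pc := 12, sp := s1, rp := r1\<rparr>"
      using U_step_loc_11[OF st 7] .
    then show ?thesis using helped before 7 unfolding helped_at_def by auto
  qed
qed

lemma helped_at_step:
  assumes inv: "invariant c" and st: "U_step \<delta> x c c'"
  shows "helped_at c' y"
proof -
  have vals: "inv_values c" and owner: "inv_owner c" and helped: "helped_at c y" "helped_at c x"
    using inv unfolding invariant_def by auto
  show ?thesis
  proof (cases "y = x")
    case True
    show ?thesis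
    proof (cases "pc (loc c x) = 3")
      case True
      then show ?thesis unfolding \<open>y = x\<close> helped_at_def U_step_loc(3)[OF st True] by simp
    next
      case False
      then show ?thesis using helped_at_step_self[OF vals st False helped(2)] \<open>y = x\<close> by simp
    qed
  next
    case False
    have loc_y: "loc c' y = loc c y" by (rule U_step_loc_other[OF st False])
    show ?thesis
    proof (cases "pc (loc c x) = 3")
      case False
      then show ?thesis
        using helped(1) U_step_pending_before[OF vals st False] unfolding helped_at_def loc_y
        by metis
    next
      case True
      \<comment> \<open>x resets H_x, but y's snapshots only carry older timestamps of x\<close>
      have H': "Hh c' = (Hh c)(x := (lt (loc c x), NULL))" using U_step_Hh[OF st] True by simp
      have "ts (loc c y) < lt (loc c x)" if "pc (loc c y) \<in> {7..12}" "rps (loc c y) = HP x"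
      proof -
        have "(ts (loc c y), HP x) \<in> circulating c"
          using circulating_S_snapshot[of c y] that by auto
        then show ?thesis using inv_ownerD(2)[OF owner] True by blast
      qed
      moreover have "tp (loc c y) < lt (loc c x)" if "pc (loc c y) \<in> {9..13}" "rpp (loc c y) = HP x"
      proof -
        have "(tp (loc c y), HP x) \<in> circulating c"
          using circulating_A_snapshot[of c y] that by auto
        then show ?thesis using inv_ownerD(2)[OF owner] True by blast
      qed
      ultimately show ?thesis using helped(1) unfolding helped_at_def loc_y H' by auto
    qed
  qed
qed

lemma invariant_step:
  assumes "invariant c" "U_step \<delta> x c c'"
  shows "invariant c'"
proof -
  have "inv_clock c" "inv_distinct_ts c" "inv_owner c" "inv_values c"
    using assms(1) unfolding invariant_def by auto
  then show ?thesis
    unfolding invariant_def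
    using inv_clock_step[OF _ assms(2)] inv_distinct_ts_step[OF _ _ assms(2)]
      inv_owner_step[OF _ _ _ assms(2)] inv_values_step[OF _ assms(2)] helped_at_step[OF assms]
    by blast
qed

section \<open>Executions\<close>

locale execution =
  fixes \<delta> :: "('q \<times> 'o \<times> 'q \<times> 'r) set" and E :: "nat \<Rightarrow> ('p,'o,'q,'r) config"
    and sched :: "nat \<Rightarrow> 'p"
  assumes transition: "\<And>k. U_step \<delta> (sched k) (E k) (E (Suc k))"
    and invariant_0: "invariant (E 0)"
    and idle_0: "\<And>x. pc (loc (E 0) x) = 1"
begin

lemma invariant: "invariant (E k)"
  by (induction k) (auto intro: invariant_step[OF _ transition] invariant_0)

lemma clock_inv: "inv_clock (E k)"
  and distinct_ts_inv: "inv_distinct_ts (E k)"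
  and owner_inv: "inv_owner (E k)"
  and values_inv: "inv_values (E k)"
  and helped_inv: "helped_at (E k) x"
  using invariant[of k] unfolding invariant_def by auto

lemma step_of: "sched k = x \<Longrightarrow> U_step \<delta> x (E k) (E (Suc k))"
  using transition[of k] by simp

lemma loc_other: "sched k \<noteq> x \<Longrightarrow> loc (E (Suc k)) x = loc (E k) x"
  using U_step_loc_other[OF transition] by metis

lemma Cc_mono: "k \<le> k' \<Longrightarrow> Cc (E k) \<le> Cc (E k')"
proof (induction k' rule: dec_induct)
  case (step n)
  then show ?case using U_step_Cc[OF transition[of n]] by simp
qed simp

lemma loc_unscheduled:
  "k \<le> j \<Longrightarrow> (\<And>m. k \<le> m \<Longrightarrow> m < j \<Longrightarrow> sched m \<noteq> x) \<Longrightarrow> loc (E j) x = loc (E k) x"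
proof (induction j rule: dec_induct)
  case (step n)
  then show ?case using loc_other[of n x] by simp
qed simp

lemma scheduled_before_active: "pc (loc (E k) x) \<noteq> 1 \<Longrightarrow> \<exists>m<k. sched m = x"
proof (induction k)
  case (Suc k)
  then show ?case using loc_other[of k x] by (cases "sched k = x") (auto simp: less_Suc_eq)
qed (simp add: idle_0)

lemma finite_active: "finite {x. pc (loc (E k) x) \<noteq> 1}"
proof (rule finite_subset)
  show "{x. pc (loc (E k) x) \<noteq> 1} \<subseteq> sched ` {..<k}"
    using scheduled_before_active by blast
qed simp

lemma next_turn:
  assumes "\<exists>\<^sub>\<infinity>j. sched j = x"
  obtains j where "k \<le> j" "sched j = x" "loc (E j) x = loc (E k) x"
proof -
  obtain j0 where "k \<le> j0" "sched j0 = x" using assms unfolding INFM_nat_le by blast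
  define j where "j = (LEAST j. k \<le> j \<and> sched j = x)"
  have j: "k \<le> j \<and> sched j = x"
    unfolding j_def by (rule LeastI[of _ j0]) (use \<open>k \<le> j0\<close> \<open>sched j0 = x\<close> in simp)
  have "loc (E j) x = loc (E k) x"
    using loc_unscheduled[of k j x] j not_less_Least unfolding j_def by blast
  with j that show ?thesis by blast
qed

lemma reach_line_4:
  assumes fair: "\<exists>\<^sub>\<infinity>j. sched j = x" and loop: "\<And>j. k1 \<le> j \<Longrightarrow> pc (loc (E j) x) \<in> {4..13}"
    and "k1 \<le> k"
  obtains j where "k \<le> j" "sched j = x" "pc (loc (E j) x) = 4"
  using \<open>k1 \<le> k\<close>
proof (induction "14 - pc (loc (E k) x)" arbitrary: k rule: less_induct)
  case less
  obtain j0 where j0: "k \<le> j0" "sched j0 = x" "loc (E j0) x = loc (E k) x"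
    using next_turn[OF fair] .
  show ?case
  proof (cases "pc (loc (E k) x) = 4")
    case True
    then show ?thesis using less.prems j0 by auto
  next
    case False
    then have "pc (loc (E j0) x) \<in> {5..13}" using loop[OF less.prems(2)] j0 by auto
    from U_step_loop_progress[OF step_of[OF j0(2)] this]
    consider "pc (loc (E (Suc j0)) x) = 4"
      | "pc (loc (E j0) x) < pc (loc (E (Suc j0)) x)" "pc (loc (E (Suc j0)) x) \<le> 13"
      by blast
    then show ?thesis
    proof cases
      case 1
      obtain j where "Suc j0 \<le> j" "sched j = x" "loc (E j) x = loc (E (Suc j0)) x"
        using next_turn[OF fair] .
      then show ?thesis using 1 j0 less.prems(1)[of j] by auto
    next
      case 2
      then show ?thesis
        using less.hyps[of "Suc j0"] less.prems j0 by fastforce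
    qed
  qed
qed

text \<open>A timestamp below C (E k0) was drawn before k0, so its holder has been inside DoOp
  since then.\<close>
lemma active_since:
  assumes "k0 \<le> k" "pc (loc (E k) x) \<in> {3..14}" "lt (loc (E k) x) < Cc (E k0)"
  shows "lt (loc (E k0) x) = lt (loc (E k) x) \<and> (\<forall>m. k0 \<le> m \<and> m \<le> k \<longrightarrow> pc (loc (E m) x) \<in> {3..14})"
  using assms
proof (induction k rule: dec_induct)
  case (step n)
  have "pc (loc (E n) x) \<in> {3..14} \<and> lt (loc (E (Suc n)) x) = lt (loc (E n) x)"
  proof (cases "sched n = x")
    case True
    note st = step_of[OF True]
    have "pc (loc (E n) x) \<in> {2..13}" using U_step_active_before[OF st step.prems(1)] .
    moreover have "pc (loc (E n) x) \<noteq> 2"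
      using U_step_lt[OF st] step.prems(2) Cc_mono[OF step.hyps(1)] by auto
    ultimately show ?thesis using U_step_lt[OF st] by auto
  next
    case False
    then show ?thesis using loc_other step.prems(1) by simp
  qed
  then show ?case using step.IH step.prems by (auto simp: le_Suc_eq)
qed (metis le_antisym)

end

lemma constant_from:
  assumes "\<And>k. m \<le> k \<Longrightarrow> f (Suc k) = f k" "m \<le> k"
  shows "f k = f m"
  using assms(2) by (induction k rule: dec_induct) (auto simp: assms(1))

section \<open>A process that never completes\<close>

locale starving = execution +
  fixes p :: 'p and t :: nat and k1 :: nat and o0 :: 'o
  assumes fair: "\<exists>\<^sub>\<infinity>j. sched j = p"
    and looping: "\<And>j. k1 \<le> j \<Longrightarrow> pc (loc (E j) p) \<in> {4..13}"
    and timestamp: "\<And>j. k1 \<le> j \<Longrightarrow> lt (loc (E j) p) = t"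
    and operation: "\<And>j. k1 \<le> j \<Longrightarrow> lop (loc (E j) p) = o0"
    and pending: "\<And>j. k1 \<le> j \<Longrightarrow> Hh (E j) p = (t, NULL)"
begin

abbreviation L where "L j \<equiv> loc (E j) p"

lemma next_step:
  obtains j' where "j < j'" "sched j' = p" "L j' = L (Suc j)"
  using next_turn[OF fair, of "Suc j"] by (metis Suc_le_eq)

lemma timestamp_bounds: "k1 \<le> k \<Longrightarrow> 0 < t \<and> t < Cc (E k)"
  using clock_inv[of k] looping[of k] timestamp[of k] unfolding inv_clock_def by force

text \<open>A full iteration of p, reading S at j5, A at j8 and what A points to at j9.\<close>
lemma iteration:
  assumes "k1 \<le> k"
  obtains j5 j7 j8 j9 j10 where "k \<le> j5" "j5 < j7" "j7 < j8" "j8 < j9" "j9 < j10"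
    "sched j7 = p" "pc (L j7) = 7" "sched j10 = p" "pc (L j10) = 10"
    "(ts (L j10), ss (L j10), rs (L j10), rps (L j10)) = Ss (E j5)"
    "(tp (L j10), opp (L j10), rpp (L j10)) = Aa (E j8)"
    "(th (L j10), rh (L j10)) = deref (E j9) (rpp (L j10))"
proof -
  obtain j4 where j4: "k \<le> j4" "sched j4 = p" "pc (L j4) = 4"
    using reach_line_4[OF fair looping assms] .
  have "L (Suc j4) = (L j4)\<lparr>pc := 5\<rparr>"
    using U_step_loc(4)[OF step_of[OF j4(2)] j4(3)] pending[of j4] timestamp[of j4] j4(1) assms
    by simp
  moreover obtain j5 where j5: "j4 < j5" "sched j5 = p" "L j5 = L (Suc j4)" using next_step .
  ultimately have l6: "L (Suc j5) = (L j5)\<lparr>pc := 6, ts := fst (Ss (E j5)), ss := fst (snd (Ss (E j5))),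
      rs := fst (snd (snd (Ss (E j5)))), rps := snd (snd (snd (Ss (E j5))))\<rparr>" "pc (L j5) = 5"
    using U_step_loc(5)[OF step_of[OF j5(2)]] by auto
  obtain j6 where j6: "j5 < j6" "sched j6 = p" "L j6 = L (Suc j5)" using next_step .
  then have l7: "L (Suc j6) = (L j6)\<lparr>pc := 7\<rparr>" using U_step_loc(6)[OF step_of[OF j6(2)]] l6 by simp
  obtain j7 where j7: "j6 < j7" "sched j7 = p" "L j7 = L (Suc j6)" using next_step .
  then have l8: "L (Suc j7) = (L j7)\<lparr>pc := 8\<rparr>" using U_step_loc(7)[OF step_of[OF j7(2)]] l7 by simp
  obtain j8 where j8: "j7 < j8" "sched j8 = p" "L j8 = L (Suc j7)" using next_step .
  then have l9: "L (Suc j8) = (L j8)\<lparr>pc := 9, tp := fst (Aa (E j8)), opp := fst (snd (Aa (E j8))),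
      rpp := snd (snd (Aa (E j8)))\<rparr>"
    using U_step_loc(8)[OF step_of[OF j8(2)]] l8 by simp
  obtain j9 where j9: "j8 < j9" "sched j9 = p" "L j9 = L (Suc j8)" using next_step .
  then have l10: "L (Suc j9) = (L j9)\<lparr>pc := 10, th := fst (deref (E j9) (rpp (L j9))),
      rh := snd (deref (E j9) (rpp (L j9)))\<rparr>"
    using U_step_loc(9)[OF step_of[OF j9(2)]] l9 by simp
  obtain j10 where j10: "j9 < j10" "sched j10 = p" "L j10 = L (Suc j9)" using next_step .
  show ?thesis
    by (rule that[of j5 j7 j8 j9 j10])
      (use j4 j5 j6 j7 j8 j9 j10 l6 l7 l8 l9 l10 in simp_all)
qed

end

locale starving_last = starving +
  fixes N1 :: nat
  assumes N1_after: "k1 \<le> N1"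
    and later_others: "\<And>k x. N1 \<le> k \<Longrightarrow> sched k = x \<Longrightarrow> x \<noteq> p \<Longrightarrow> pc (loc (E k) x) \<in> {3..14}
      \<Longrightarrow> t < lt (loc (E k) x)"
begin

lemma writer_timestamp:
  assumes "N1 \<le> k" "pc (loc (E k) (sched k)) \<in> {7,13}"
  shows "sched k = p \<and> lt (loc (E k) (sched k)) = t \<or> t < lt (loc (E k) (sched k))"
  using timestamp[of k] later_others[OF assms(1) refl] assms N1_after by fastforce

lemma A_frozen_at_t:
  assumes k: "N1 \<le> k" and A: "fst (Aa (E k)) = t"
  shows "Aa (E (Suc k)) = Aa (E k)"
proof -
  let ?l = "loc (E k) (sched k)"
  have "\<not> (pc ?l = 13 \<and> Aa (E k) = (tp ?l, opp ?l, rpp ?l))"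
  proof
    assume line13: "pc ?l = 13 \<and> Aa (E k) = (tp ?l, opp ?l, rpp ?l)"
    have "snd (snd (Aa (E k))) \<noteq> HNoop"
      using values_inv[of k] A timestamp_bounds[of k] N1_after k unfolding inv_values_def by auto
    then obtain y where y: "snd (snd (Aa (E k))) = HP y" by (cases "snd (snd (Aa (E k)))") auto
    have "(t, HP y) \<in> circulating (E k)" using circulating_A[of "E k"] y A by simp
    then have "y = p"
      using inv_ownerD(3)[OF owner_inv] looping[of k] timestamp[of k] N1_after k by force
    then have "Hh (E k) p \<noteq> (t, NULL)"
      using helped_inv[of k "sched k"] line13 y A unfolding helped_at_def by auto
    then show False using pending[of k] N1_after k by simp
  qed
  then show ?thesis using U_step_Aa[OF transition[of k]] writer_timestamp[OF k] A by auto
qed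

lemma A_time_step:
  assumes "N1 \<le> k"
  shows "fst (Aa (E k)) < t \<Longrightarrow> Aa (E (Suc k)) = Aa (E k) \<or> t \<le> fst (Aa (E (Suc k)))"
    and "t \<le> fst (Aa (E k)) \<Longrightarrow> t \<le> fst (Aa (E (Suc k)))"
  using U_step_Aa[OF transition[of k]] writer_timestamp[OF assms] by (auto split: if_splits)

lemma A_stable: obtains M where "N1 \<le> M" "\<forall>k\<ge>M. Aa (E k) = Aa (E M)"
proof (cases "\<forall>k\<ge>N1. fst (Aa (E k)) < t")
  case True
  have "Aa (E k) = Aa (E N1)" if "N1 \<le> k" for k
    using that
  proof (induction k rule: dec_induct)
    case (step n)
    have "fst (Aa (E n)) < t" "fst (Aa (E (Suc n))) < t" using True step.hyps(1) by (simp_all add: le_SucI)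
    then show ?case using A_time_step(1)[OF step.hyps(1)] step.IH by (metis not_le)
  qed simp
  then show ?thesis using that[of N1] by blast
next
  case False
  then obtain k' where k': "N1 \<le> k'" "t \<le> fst (Aa (E k'))" by (auto simp: not_less)
  have above: "t \<le> fst (Aa (E k))" if "k' \<le> k" for k
    using that
  proof (induction k rule: dec_induct)
    case (step n)
    then show ?case using A_time_step(2)[of n] k'(1) by simp
  qed (rule k'(2))
  obtain j5 j7 j8 j9 j10 where j: "k' \<le> j5" "j5 < j7" "sched j7 = p" "pc (L j7) = 7"
    using iteration[OF order_trans[OF N1_after k'(1)]] by blast
  have "N1 \<le> j7" using j k' by simp
  then have "fst (Aa (E (Suc j7))) \<le> t"
    using U_step_Aa[OF step_of[OF j(3)]] j(4) timestamp[of j7] N1_after by auto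
  then have at_t: "fst (Aa (E (Suc j7))) = t" using above[of "Suc j7"] j by simp
  have frozen: "Aa (E k) = Aa (E (Suc j7))" if "Suc j7 \<le> k" for k
    using that
  proof (induction k rule: dec_induct)
    case (step n)
    have "N1 \<le> n" using step.hyps(1) \<open>N1 \<le> j7\<close> by simp
    moreover have "fst (Aa (E n)) = t" using step.IH at_t by simp
    ultimately show ?case using A_frozen_at_t step.IH by simp
  qed simp
  show ?thesis
  proof (rule that)
    show "N1 \<le> Suc j7" using \<open>N1 \<le> j7\<close> by simp
    show "\<forall>k\<ge>Suc j7. Aa (E k) = Aa (E (Suc j7))" using frozen by blast
  qed
qed

end

locale starving_A_constant = starving_last +
  fixes M :: nat and \<phi>
  assumes M_after: "N1 \<le> M"
    and A_constant: "\<And>k. M \<le> k \<Longrightarrow> Aa (E k) = \<phi>"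
begin

definition target_pending :: "nat \<Rightarrow> bool" where
  "target_pending k \<longleftrightarrow> (\<exists>q. snd (snd \<phi>) = HP q \<and> Hh (E k) q = (fst \<phi>, NULL))"

text \<open>Re-arming H_q with time fst \<phi> would need a new timestamp of q, which is larger.\<close>
lemma target_pending_not_rearmed:
  assumes k: "M \<le> k" and cleared: "\<not> target_pending k"
  shows "\<not> target_pending (Suc k)"
proof
  assume "target_pending (Suc k)"
  then obtain q where q: "snd (snd \<phi>) = HP q" "Hh (E (Suc k)) q = (fst \<phi>, NULL)"
    unfolding target_pending_def by blast
  have "(fst \<phi>, HP q) \<in> circulating (E k)" using circulating_A[of "E k"] A_constant[OF k] q by simp
  then have "sched k \<noteq> q \<or> pc (loc (E k) (sched k)) \<noteq> 3 \<or> lt (loc (E k) (sched k)) \<noteq> fst \<phi>"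
    using inv_ownerD(2)[OF owner_inv] by fastforce
  moreover have "Hh (E k) q \<noteq> (fst \<phi>, NULL)" using cleared q(1) unfolding target_pending_def by blast
  ultimately have "Hh (E (Suc k)) q \<noteq> (fst \<phi>, NULL)"
    by (rule U_step_not_pending[OF values_inv transition])
  then show False using q(2) by simp
qed

lemma A_target_pending:
  obtains q where "snd (snd \<phi>) = HP q" "\<forall>k\<ge>M. Hh (E k) q = (fst \<phi>, NULL)"
proof (cases "\<phi> = (t, Some o0, HP p)")
  case True
  then show ?thesis using that pending M_after N1_after by auto
next
  case False
  have "target_pending k" if "M \<le> k" for k
  proof (rule ccontr)
    assume not_pending: "\<not> target_pending k"
    have cleared: "\<not> target_pending j" if "k \<le> j" for j
      using that
    proof (induction j rule: dec_induct)
      case (step n)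
      then show ?case using target_pending_not_rearmed[of n] \<open>M \<le> k\<close> by simp
    qed (rule not_pending)
    have "k1 \<le> k" using \<open>M \<le> k\<close> M_after N1_after by simp
    then obtain j5 j7 j8 j9 j10 where j: "k \<le> j5" "j5 < j7" "j7 < j8" "j8 < j9" "j9 < j10"
        "sched j10 = p" "pc (L j10) = 10" "(tp (L j10), opp (L j10), rpp (L j10)) = Aa (E j8)"
        "(th (L j10), rh (L j10)) = deref (E j9) (rpp (L j10))"
      by (rule iteration) blast
    have A_read: "(tp (L j10), opp (L j10), rpp (L j10)) = \<phi>" using j A_constant \<open>M \<le> k\<close> by simp
    have "(th (L j10), rh (L j10)) \<noteq> (tp (L j10), NULL)"
      using j(9) A_read cleared[of j9] j(1-4)
      unfolding target_pending_def deref_def by (auto split: ptr.splits)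
    then have line13: "L (Suc j10) = (L j10)\<lparr>pc := 13\<rparr>"
      using U_step_loc(10)[OF step_of[OF j(6)] j(7)] by simp
    obtain j13 where j13: "j10 < j13" "sched j13 = p" "L j13 = L (Suc j10)" using next_step .
    have "M \<le> j13" using j13 j \<open>M \<le> k\<close> by simp
    then have "Aa (E (Suc j13)) = (t, Some o0, HP p)"
      using U_step_Aa[OF step_of[OF j13(2)]] A_constant[of j13] A_read j13(3) line13
        timestamp[of j13] operation[of j13] M_after N1_after by auto
    moreover have "Aa (E (Suc j13)) = \<phi>" using A_constant \<open>M \<le> j13\<close> by simp
    ultimately show False using False by simp
  qed
  then show ?thesis using that unfolding target_pending_def by (metis order_refl ptr.inject)
qed

end

locale starving_target = starving_A_constant +
  fixes q
  assumes target: "snd (snd \<phi>) = HP q"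
    and target_pending: "\<And>k. M \<le> k \<Longrightarrow> Hh (E k) q = (fst \<phi>, NULL)"
begin

text \<open>Once S carries the pair of \<phi>, it can no longer change, and the next reader of S
  (line 6) would answer the pending H_q.\<close>
lemma S_never_target:
  assumes k: "M \<le> k" and S: "fst (Ss (E k)) = fst \<phi>" "snd (snd (snd (Ss (E k)))) = HP q"
  shows False
proof -
  have S_step: "Ss (E (Suc m)) = Ss (E m)" if "k \<le> m" "Ss (E m) = Ss (E k)" for m
  proof -
    let ?l = "loc (E m) (sched m)"
    have "\<not> (pc ?l = 12 \<and> Ss (E m) = (ts ?l, ss ?l, rs ?l, rps ?l))"
    proof
      assume "pc ?l = 12 \<and> Ss (E m) = (ts ?l, ss ?l, rs ?l, rps ?l)"
      then have "Hh (E m) q \<noteq> (fst \<phi>, NULL)"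
        using helped_inv[of m "sched m"] that(2) S unfolding helped_at_def by auto
      then show False using target_pending[of m] k that(1) by simp
    qed
    then show ?thesis using U_step_Ss[OF transition[of m]] by auto
  qed
  have S_const: "Ss (E m) = Ss (E k)" if "k \<le> m" for m
    using that
  proof (induction m rule: dec_induct)
    case (step n)
    then show ?case using S_step[of n] by simp
  qed simp
  have "k1 \<le> k" using k M_after N1_after by simp
  then obtain j5 j7 j8 j9 j10 where j: "k \<le> j5" "j5 < j7" "j7 < j8" "j8 < j9" "j9 < j10"
      "pc (L j10) = 10" "(ts (L j10), ss (L j10), rs (L j10), rps (L j10)) = Ss (E j5)"
    by (rule iteration) blast
  then have "ts (L j10) = fst \<phi>" "rps (L j10) = HP q"
    using S_const[of j5] S by (cases "Ss (E k)", auto)+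
  then have "Hh (E j10) q \<noteq> (fst \<phi>, NULL)" using helped_inv[of j10 p] j(6) unfolding helped_at_def by simp
  then show False using target_pending[of j10] j k by simp
qed

definition stale_readers where
  "stale_readers = {x. pc (loc (E M) x) \<in> {9..13}}"

lemma finite_stale_readers: "finite stale_readers"
  using finite_active[of M] by (rule rev_finite_subset) (auto simp: stale_readers_def)

lemma A_snapshot_current_or_stale:
  assumes "M \<le> k"
  shows "\<forall>x. pc (loc (E k) x) \<in> {9..13} \<longrightarrow>
    (tp (loc (E k) x) = fst \<phi> \<and> rpp (loc (E k) x) = HP q) \<or>
    (x \<in> stale_readers \<and> (\<forall>m. M \<le> m \<and> m < k \<and> sched m = x \<longrightarrow> pc (loc (E m) x) \<in> {9,10,11}))"
  using assms
proof (induction k rule: dec_induct)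
  case base
  then show ?case unfolding stale_readers_def by auto
next
  case (step n)
  show ?case
  proof (intro allI impI)
    fix x assume x: "pc (loc (E (Suc n)) x) \<in> {9..13}"
    show "(tp (loc (E (Suc n)) x) = fst \<phi> \<and> rpp (loc (E (Suc n)) x) = HP q) \<or>
      (x \<in> stale_readers \<and> (\<forall>m. M \<le> m \<and> m < Suc n \<and> sched m = x \<longrightarrow> pc (loc (E m) x) \<in> {9,10,11}))"
    proof (cases "sched n = x")
      case False
      then show ?thesis using loc_other[OF False] x step.IH by (auto simp: less_Suc_eq)
    next
      case True
      note st = step_of[OF True]
      have before: "pc (loc (E n) x) \<in> {8..11}" using U_step_enter_9_13[OF st x] .
      show ?thesis
      proof (cases "pc (loc (E n) x) = 8")
        case True
        then show ?thesis
          using U_step_loc(8)[OF st True] A_constant[OF step.hyps(1)] target by auto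
      next
        case False
        then have pc_n: "pc (loc (E n) x) \<in> {9,10,11}" using before by auto
        then have "(tp (loc (E n) x) = fst \<phi> \<and> rpp (loc (E n) x) = HP q) \<or>
            (x \<in> stale_readers \<and> (\<forall>m. M \<le> m \<and> m < n \<and> sched m = x \<longrightarrow> pc (loc (E m) x) \<in> {9,10,11}))"
          using step.IH[rule_format, of x] by auto
        then show ?thesis
          using U_step_A_snapshot[OF st pc_n] pc_n \<open>sched n = x\<close> by (auto simp: less_Suc_eq)
      qed
    qed
  qed
qed

lemma S_changed_by_stale:
  assumes k: "M \<le> k" and changed: "Ss (E (Suc k)) \<noteq> Ss (E k)"
  shows "sched k \<in> stale_readers" "pc (loc (E k) (sched k)) = 12"
    "\<And>m. M \<le> m \<Longrightarrow> m < k \<Longrightarrow> sched m = sched k \<Longrightarrow> pc (loc (E m) (sched k)) \<in> {9,10,11}"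
proof -
  let ?l = "loc (E k) (sched k)"
  have line12: "pc ?l = 12" "Ss (E (Suc k)) = (tp ?l, sp ?l, Val (rp ?l), rpp ?l)"
    using U_step_Ss[OF transition[of k]] changed by (auto split: if_splits)
  have "\<not> (tp ?l = fst \<phi> \<and> rpp ?l = HP q)"
    using S_never_target[of "Suc k"] line12(2) k by auto
  then have "sched k \<in> stale_readers \<and>
      (\<forall>m. M \<le> m \<and> m < k \<and> sched m = sched k \<longrightarrow> pc (loc (E m) (sched k)) \<in> {9,10,11})"
    using A_snapshot_current_or_stale[OF k, rule_format, of "sched k"] line12(1) by auto
  then show "sched k \<in> stale_readers" "pc ?l = 12"
    "\<And>m. M \<le> m \<Longrightarrow> m < k \<Longrightarrow> sched m = sched k \<Longrightarrow> pc (loc (E m) (sched k)) \<in> {9,10,11}"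
    using line12(1) by auto
qed

text \<open>Each stale reader changes S at most once, since it leaves line 12 afterwards.\<close>
lemma S_stable: obtains M' where "M \<le> M'" "\<forall>k\<ge>M'. Ss (E k) = Ss (E M')"
proof -
  define K where "K = {k. M \<le> k \<and> Ss (E (Suc k)) \<noteq> Ss (E k)}"
  have once: False if "a \<in> K" "b \<in> K" "sched a = sched b" "a < b" for a b
  proof -
    have "M \<le> a" "M \<le> b" "Ss (E (Suc a)) \<noteq> Ss (E a)" "Ss (E (Suc b)) \<noteq> Ss (E b)"
      using that(1,2) unfolding K_def by auto
    then have "pc (loc (E a) (sched a)) = 12" "pc (loc (E a) (sched b)) \<in> {9,10,11}"
      using S_changed_by_stale(2)[of a] S_changed_by_stale(3)[of b a] that(3,4) by auto
    then show False using that(3) by simp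
  qed
  have "inj_on sched K"
  proof (rule inj_onI)
    show "a = b" if "a \<in> K" "b \<in> K" "sched a = sched b" for a b
      using once[of a b] once[of b a] that by (cases a b rule: linorder_cases) auto
  qed
  moreover have "finite (sched ` K)"
  proof (rule finite_subset[OF _ finite_stale_readers])
    show "sched ` K \<subseteq> stale_readers" using S_changed_by_stale(1) unfolding K_def by blast
  qed
  ultimately have "finite K" by (rule finite_imageD[rotated])
  then obtain B where B: "K \<subseteq> {..<B}" using finite_nat_bounded by blast
  have S_step: "Ss (E (Suc k)) = Ss (E k)" if "max M B \<le> k" for k
  proof -
    have "k \<notin> K" "M \<le> k" using B that by auto
    then show ?thesis unfolding K_def by simp
  qed
  have "\<forall>k\<ge>max M B. Ss (E k) = Ss (E (max M B))"
    using constant_from[of "max M B" "\<lambda>k. Ss (E k)", OF S_step] by blast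
  then show ?thesis by (rule that[rotated]) simp
qed

lemma inconsistent: False
proof -
  obtain M' where M': "M \<le> M'" "\<forall>k\<ge>M'. Ss (E k) = Ss (E M')" using S_stable .
  have "k1 \<le> M'" using M'(1) M_after N1_after by simp
  then obtain j5 j7 j8 j9 j10 where j: "M' \<le> j5" "j5 < j7" "j7 < j8" "j8 < j9" "j9 < j10"
      "sched j10 = p" "pc (L j10) = 10"
      "(ts (L j10), ss (L j10), rs (L j10), rps (L j10)) = Ss (E j5)"
      "(tp (L j10), opp (L j10), rpp (L j10)) = Aa (E j8)"
      "(th (L j10), rh (L j10)) = deref (E j9) (rpp (L j10))"
    by (rule iteration) blast
  have A_read: "(tp (L j10), opp (L j10), rpp (L j10)) = \<phi>" using j A_constant M'(1) by simp
  have "(th (L j10), rh (L j10)) = (tp (L j10), NULL)"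
    using j(10) A_read target target_pending[of j9] M'(1) j(1-4) unfolding deref_def by auto
  then have line11: "L (Suc j10) = (L j10)\<lparr>pc := 11\<rparr>"
    using U_step_loc(10)[OF step_of[OF j(6)] j(7)] by simp
  obtain j11 where j11: "j10 < j11" "sched j11 = p" "L j11 = L (Suc j10)" using next_step .
  have "pc (L j11) = 11" using j11(3) line11 by simp
  then obtain s1 r1 where "L (Suc j11) = (L j11)\<lparr>pc := 12, sp := s1, rp := r1\<rparr>"
    by (rule U_step_loc_11[OF step_of[OF j11(2)]])
  then have line12: "L (Suc j11) = (L j10)\<lparr>pc := 12, sp := s1, rp := r1\<rparr>"
    using j11(3) line11 by simp
  obtain j12 where j12: "j11 < j12" "sched j12 = p" "L j12 = L (Suc j11)" using next_step .
  have "M' \<le> j12" using j j11 j12 by simp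
  then have "Ss (E j12) = Ss (E j5)" using M'(2) j(1) by metis
  then have "Ss (E j12) = (ts (L j12), ss (L j12), rs (L j12), rps (L j12))"
    using j(8) j12(3) line12 by simp
  then have "Ss (E (Suc j12)) = (tp (L j10), sp (L j12), Val (rp (L j12)), rpp (L j10))"
    using U_step_Ss[OF step_of[OF j12(2)]] j12(3) line12 by simp
  then have "fst (Ss (E (Suc j12))) = fst \<phi>" "snd (snd (snd (Ss (E (Suc j12))))) = HP q"
    using A_read target by auto
  then show False using S_never_target[of "Suc j12"] M'(1) \<open>M' \<le> j12\<close> by simp
qed

end

context starving_last
begin

lemma inconsistent: False
proof -
  obtain M where M: "N1 \<le> M" "\<forall>k\<ge>M. Aa (E k) = Aa (E M)" using A_stable .
  interpret A_const: starving_A_constant \<delta> E sched p t k1 o0 N1 M "Aa (E M)"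
  proof unfold_locales
    show "N1 \<le> M" by (rule M(1))
    show "Aa (E k) = Aa (E M)" if "M \<le> k" for k using M(2) that by blast
  qed
  obtain q where q: "snd (snd (Aa (E M))) = HP q" "\<forall>k\<ge>M. Hh (E k) q = (fst (Aa (E M)), NULL)"
    using A_const.A_target_pending .
  interpret starving_target \<delta> E sched p t k1 o0 N1 M "Aa (E M)" q
    using q by unfold_locales simp_all
  show False by (rule inconsistent)
qed

end

section \<open>Wait-freedom by induction on timestamps\<close>

context execution
begin

lemma stuck_inside_DoOp:
  assumes "pc (loc (E k0) x) \<in> {3..14}" and never: "\<And>j. k0 \<le> j \<Longrightarrow> pc (loc (E j) x) \<noteq> 14"
    and "k0 \<le> j"
  shows "pc (loc (E j) x) \<in> {3..13} \<and> lt (loc (E j) x) = lt (loc (E k0) x)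
    \<and> lop (loc (E j) x) = lop (loc (E k0) x)"
  using \<open>k0 \<le> j\<close>
proof (induction j rule: dec_induct)
  case base
  then show ?case using assms(1) never[of k0] by auto
next
  case (step n)
  show ?case
  proof (cases "sched n = x")
    case True
    then show ?thesis
      using U_step_within_DoOp[OF step_of[OF True]] step never[of "Suc n"] by auto
  qed (use loc_other step in simp)
qed

text \<open>H_x stays pending, as otherwise the next visit of line 4 would leave the loop.\<close>
lemma stuck_pending:
  assumes fair: "\<exists>\<^sub>\<infinity>j. sched j = x"
    and stuck: "\<And>j. k0 \<le> j \<Longrightarrow> pc (loc (E j) x) \<in> {3..13} \<and> lt (loc (E j) x) = t"
  obtains k1 where "k0 \<le> k1" "\<forall>j\<ge>k1. pc (loc (E j) x) \<in> {4..13} \<and> Hh (E j) x = (t, NULL)"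
proof -
  obtain k1 where k1: "k0 \<le> k1" "pc (loc (E k1) x) \<noteq> 3"
  proof (cases "pc (loc (E k0) x) = 3")
    case True
    obtain j where j: "k0 \<le> j" "sched j = x" "loc (E j) x = loc (E k0) x" using next_turn[OF fair] .
    then have "pc (loc (E (Suc j)) x) = 4" using U_step_loc(3)[OF step_of[OF j(2)]] True by simp
    then show ?thesis using that[of "Suc j"] j by simp
  qed (use that in blast)
  have loop: "pc (loc (E j) x) \<in> {4..13}" if "k1 \<le> j" for j
    using that
  proof (induction j rule: dec_induct)
    case (step n)
    have "pc (loc (E (Suc n)) x) \<noteq> 3"
      using U_step_pc_eq_3[OF transition[of n]] loc_other[of n x] stuck[of n] step k1(1)
      by (cases "sched n = x") auto
    then show ?case using stuck[of "Suc n"] step k1(1) by auto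
  qed (use k1 stuck[of k1] in auto)
  have "Hh (E j) x = (t, NULL)" if "k1 \<le> j" for j
  proof (rule ccontr)
    assume not_pending: "Hh (E j) x \<noteq> (t, NULL)"
    have cleared: "Hh (E j') x \<noteq> (t, NULL)" if "j \<le> j'" for j'
      using that
    proof (induction j' rule: dec_induct)
      case (step n)
      have "sched n \<noteq> x \<or> pc (loc (E n) (sched n)) \<noteq> 3" using loop[of n] step \<open>k1 \<le> j\<close> by auto
      then show ?case using U_step_not_pending[OF values_inv transition] step.IH by blast
    qed (rule not_pending)
    obtain j4 where j4: "j \<le> j4" "sched j4 = x" "pc (loc (E j4) x) = 4"
      using reach_line_4[OF fair loop \<open>k1 \<le> j\<close>] .
    then have "pc (loc (E (Suc j4)) x) = 14"
      using U_step_loc(4)[OF step_of[OF j4(2)]] cleared[of j4] stuck[of j4] k1(1) \<open>k1 \<le> j\<close> by simp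
    then show False using loop[of "Suc j4"] j4 \<open>k1 \<le> j\<close> by simp
  qed
  then show ?thesis using that k1(1) loop by blast
qed

text \<open>The operations with timestamps below t that were pending at k0 are finitely many;
  each completes or its process stops taking steps, and timestamps handed out after k0
  exceed t.\<close>
lemma eventually_later_timestamps:
  assumes IH: "\<And>s x k. s < t \<Longrightarrow> pc (loc (E k) x) \<in> {3..14} \<Longrightarrow> lt (loc (E k) x) = s \<Longrightarrow>
      \<exists>\<^sub>\<infinity>j. sched j = x \<Longrightarrow> \<exists>j\<ge>k. pc (loc (E j) x) = 14"
    and p: "pc (loc (E k0) p) \<in> {3..14}" "lt (loc (E k0) p) = t"
  obtains N where "k0 \<le> N"
    "\<forall>k\<ge>N. sched k \<noteq> p \<longrightarrow> pc (loc (E k) (sched k)) \<in> {3..14} \<longrightarrow> t < lt (loc (E k) (sched k))"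
proof -
  have t_issued: "t < Cc (E k0)" using clock_inv[of k0] p unfolding inv_clock_def by auto
  define F where "F = {x. pc (loc (E k0) x) \<in> {3..14} \<and> lt (loc (E k0) x) < t}"
  have "finite F" using finite_active[of k0] by (rule rev_finite_subset) (auto simp: F_def)
  have done_eventually:
    "\<forall>\<^sub>\<infinity>k. \<not> (sched k = x \<and> pc (loc (E k) x) \<in> {3..14} \<and> lt (loc (E k) x) < t)"
    if x: "x \<in> F" for x
  proof (cases "\<exists>\<^sub>\<infinity>j. sched j = x")
    case True
    have "\<exists>j\<ge>k0. pc (loc (E j) x) = 14"
      using IH[of "lt (loc (E k0) x)" k0 x] True x unfolding F_def by blast
    then obtain j where j: "k0 \<le> j" "pc (loc (E j) x) = 14" by blast
    obtain j' where j': "j \<le> j'" "sched j' = x" "loc (E j') x = loc (E j) x"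
      using next_turn[OF True] .
    have idle: "pc (loc (E (Suc j')) x) = 1" using U_step_loc(13)[OF step_of[OF j'(2)]] j j' by simp
    have "\<not> (pc (loc (E k) x) \<in> {3..14} \<and> lt (loc (E k) x) < t)" if "Suc j' \<le> k" for k
    proof
      assume active: "pc (loc (E k) x) \<in> {3..14} \<and> lt (loc (E k) x) < t"
      have "k0 \<le> k" using that j j' by simp
      moreover have "lt (loc (E k) x) < Cc (E k0)" using active t_issued by simp
      ultimately have "\<forall>m. k0 \<le> m \<and> m \<le> k \<longrightarrow> pc (loc (E m) x) \<in> {3..14}"
        using active_since[of k0 k x] active by blast
      then have "pc (loc (E (Suc j')) x) \<in> {3..14}" using that j j' by simp
      then show False using idle by simp
    qed
    then show ?thesis unfolding MOST_nat_le by (intro exI[of _ "Suc j'"]) blast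
  next
    case False
    then have "\<forall>\<^sub>\<infinity>k. sched k \<noteq> x" by simp
    then show ?thesis by (rule MOST_mono) blast
  qed
  have "\<forall>\<^sub>\<infinity>k. \<forall>x\<in>F. \<not> (sched k = x \<and> pc (loc (E k) x) \<in> {3..14} \<and> lt (loc (E k) x) < t)"
    by (rule eventually_ball_finite[OF \<open>finite F\<close>]) (use done_eventually in blast)
  then obtain N where N:
    "\<forall>k\<ge>N. \<forall>x\<in>F. \<not> (sched k = x \<and> pc (loc (E k) x) \<in> {3..14} \<and> lt (loc (E k) x) < t)"
    unfolding MOST_nat_le by blast
  have "t < lt (loc (E k) x)"
    if k: "max k0 N \<le> k" and x: "sched k = x" "x \<noteq> p" "pc (loc (E k) x) \<in> {3..14}" for k x
  proof (rule ccontr)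
    assume not_later: "\<not> t < lt (loc (E k) x)"
    have "k0 \<le> k" using k by simp
    moreover have "lt (loc (E k) x) < Cc (E k0)" using not_later t_issued by simp
    ultimately have "lt (loc (E k0) x) = lt (loc (E k) x)"
      "\<forall>m. k0 \<le> m \<and> m \<le> k \<longrightarrow> pc (loc (E m) x) \<in> {3..14}"
      using active_since[of k0 k x] x(3) by blast+
    then have since: "pc (loc (E k0) x) \<in> {3..14}" "lt (loc (E k0) x) = lt (loc (E k) x)"
      using \<open>k0 \<le> k\<close> by simp_all
    show False
    proof (cases "lt (loc (E k) x) = t")
      case True
      then have "lt (loc (E k0) x) = lt (loc (E k0) p)" using since p by simp
      then show False
        using distinct_ts_inv[of k0] since(1) p(1) x(2) unfolding inv_distinct_ts_def by blast
    next
      case False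
      then have "x \<in> F" using since not_later unfolding F_def by auto
      moreover have "N \<le> k" using k by simp
      ultimately show False using N x(1,3) not_later False by auto
    qed
  qed
  then show ?thesis using that[of "max k0 N"] by simp
qed

theorem completes:
  "pc (loc (E k) x) \<in> {3..14} \<Longrightarrow> lt (loc (E k) x) = t \<Longrightarrow> \<exists>\<^sub>\<infinity>j. sched j = x
    \<Longrightarrow> \<exists>j\<ge>k. pc (loc (E j) x) = 14"
proof (induction t arbitrary: x k rule: less_induct)
  case (less t)
  show ?case
  proof (rule ccontr)
    assume "\<not> ?case"
    then have never: "\<And>j. k \<le> j \<Longrightarrow> pc (loc (E j) x) \<noteq> 14" by auto
    have stuck: "pc (loc (E j) x) \<in> {3..13} \<and> lt (loc (E j) x) = t \<and> lop (loc (E j) x) = lop (loc (E k) x)"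
      if "k \<le> j" for j
      using stuck_inside_DoOp[of k x j] less.prems(1,2) never that by blast
    have "pc (loc (E j) x) \<in> {3..13} \<and> lt (loc (E j) x) = t" if "k \<le> j" for j
      using stuck[OF that] by simp
    then obtain k1 where k1: "k \<le> k1"
        "\<forall>j\<ge>k1. pc (loc (E j) x) \<in> {4..13} \<and> Hh (E j) x = (t, NULL)"
      by (rule stuck_pending[OF less.prems(3)])
    obtain N where N: "k \<le> N"
      "\<forall>k'\<ge>N. sched k' \<noteq> x \<longrightarrow> pc (loc (E k') (sched k')) \<in> {3..14} \<longrightarrow> t < lt (loc (E k') (sched k'))"
      using eventually_later_timestamps[OF less.IH less.prems(1,2)] .
    interpret starving_last \<delta> E sched x t k1 "lop (loc (E k) x)" "max k1 N"
    proof unfold_locales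
      fix j assume "k1 \<le> j"
      then show "pc (loc (E j) x) \<in> {4..13}" "Hh (E j) x = (t, NULL)"
        and "lt (loc (E j) x) = t" "lop (loc (E j) x) = lop (loc (E k) x)"
        using k1 stuck[of j] by auto
    next
      fix k' y assume "max k1 N \<le> k'" "sched k' = y" "y \<noteq> x" "pc (loc (E k') y) \<in> {3..14}"
      then show "t < lt (loc (E k') y)" using N(2) by auto
    qed (use less.prems(3) in auto)
    show False by (rule inconsistent)
  qed
qed

end

theorem mainTheorem1:
  fixes \<delta> :: "('q \<times> 'o \<times> 'q \<times> 'r) set" and s0 :: 'q
    and H0 :: "'p \<Rightarrow> nat \<times> 'r rval" and L0 :: "'p \<Rightarrow> ('p,'o,'q,'r) local"
    and E :: "nat \<Rightarrow> ('p,'o,'q,'r) config" and sched :: "nat \<Rightarrow> 'p"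
    and p :: 'p and i :: nat
  assumes "init_config s0 H0 L0 (E 0)"
    and "\<forall>k. U_step \<delta> (sched k) (E k) (E (Suc k))"
    and "sched i = p" and "pc (loc (E i) p) = 1"
    and "\<exists>\<^sub>\<infinity>k. sched k = p"
  shows "\<exists>j\<ge>i. sched j = p \<and> pc (loc (E j) p) = 14"
proof -
  interpret execution \<delta> E sched
  proof unfold_locales
    show "U_step \<delta> (sched k) (E k) (E (Suc k))" for k using assms(2) by blast
    show "invariant (E 0)" by (rule invariant_init[OF assms(1)])
    show "pc (loc (E 0) x) = 1" for x using assms(1) unfolding init_config_def by auto
  qed
  have "pc (loc (E (Suc i)) p) = 2" using U_step_loc(1)[OF step_of[OF assms(3)] assms(4)] by auto
  moreover obtain j2 where j2: "Suc i \<le> j2" "sched j2 = p" "loc (E j2) p = loc (E (Suc i)) p"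
    using next_turn[OF assms(5)] .
  ultimately have "pc (loc (E (Suc j2)) p) = 3" using U_step_loc(2)[OF step_of[OF j2(2)]] by simp
  then obtain j where j: "Suc j2 \<le> j" "pc (loc (E j) p) = 14"
    using completes[where k = "Suc j2" and x = p, OF _ refl assms(5)] by auto
  obtain j' where "j \<le> j'" "sched j' = p" "loc (E j') p = loc (E j) p" using next_turn[OF assms(5)] .
  then show ?thesis using j j2 by (intro exI[of _ j']) auto
qed

end
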